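(* Let $G$ be an innately transitive permutation group on a finite set $\Omega$ with plinth $M$, and let $\mathcal E\in \mathrm{CD}(G)$. Then $M_{(\mathcal E)}=M$, i.e. $M$ stabilises every partition in $\mathcal E$.
   Context: A Cartesian decomposition of a finite set $\Omega$ is a set $\mathcal E=\{\Gamma_1,\dots,\Gamma_\ell\}$ of partitions of $\Omega$ such that $|\gamma_1\cap\cdots\cap\gamma_\ell|=1$ for all $\gamma_1\in\Gamma_1,\dots,\gamma_\ell\in\Gamma_\ell$; $\ell$ is its index, and Cartesian decompositions are assumed non-trivial, i.e. $\ell\ge2$. For $G\le\mathrm{Sym}(\Omega)$, $\mathrm{CD}(G)$ is the set of Cartesian decompositions of $\Omega$ that are invariant under $G$ (i.e. $G$ permutes the partitions in $\mathcal E$ under its induced action on partitions). For $M\le G$, $M_{(\mathcal E)}$ denotes the subgroup of elements of $M$ fixing every element of $\mathcal E$. A permutation group is innately transitive if it has a transitive minimal normal subgroup, called a plinth. *)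

theory Defs
  imports "HOL-Library.Disjoint_Sets" "HOL-Combinatorics.Permutations"
begin

definition perm_group :: "'a set \<Rightarrow> ('a \<Rightarrow> 'a) set \<Rightarrow> bool" where
  "perm_group \<Omega> G \<longleftrightarrow> G \<subseteq> {p. p permutes \<Omega>} \<and> id \<in> G \<and>
     (\<forall>p\<in>G. \<forall>q\<in>G. p \<circ> q \<in> G) \<and> (\<forall>p\<in>G. inv p \<in> G)"

definition subgroup_of :: "('a \<Rightarrow> 'a) set \<Rightarrow> ('a \<Rightarrow> 'a) set \<Rightarrow> bool" where
  "subgroup_of H G \<longleftrightarrow> H \<subseteq> G \<and> id \<in> H \<and>
     (\<forall>p\<in>H. \<forall>q\<in>H. p \<circ> q \<in> H) \<and> (\<forall>p\<in>H. inv p \<in> H)"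

definition normal_subgroup_of :: "('a \<Rightarrow> 'a) set \<Rightarrow> ('a \<Rightarrow> 'a) set \<Rightarrow> bool" where
  "normal_subgroup_of N G \<longleftrightarrow> subgroup_of N G \<and>
     (\<forall>g\<in>G. \<forall>n\<in>N. g \<circ> n \<circ> inv g \<in> N)"

definition minimal_normal_subgroup :: "('a \<Rightarrow> 'a) set \<Rightarrow> ('a \<Rightarrow> 'a) set \<Rightarrow> bool" where
  "minimal_normal_subgroup M G \<longleftrightarrow> normal_subgroup_of M G \<and> M \<noteq> {id} \<and>
     (\<forall>N. normal_subgroup_of N G \<and> N \<subseteq> M \<longrightarrow> N = {id} \<or> N = M)"

definition transitive_on :: "'a set \<Rightarrow> ('a \<Rightarrow> 'a) set \<Rightarrow> bool" where
  "transitive_on \<Omega> H \<longleftrightarrow> (\<forall>x\<in>\<Omega>. \<forall>y\<in>\<Omega>. \<exists>h\<in>H. h x = y)"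

definition plinth :: "'a set \<Rightarrow> ('a \<Rightarrow> 'a) set \<Rightarrow> ('a \<Rightarrow> 'a) set \<Rightarrow> bool" where
  "plinth \<Omega> G M \<longleftrightarrow> minimal_normal_subgroup M G \<and> transitive_on \<Omega> M"

definition innately_transitive :: "'a set \<Rightarrow> ('a \<Rightarrow> 'a) set \<Rightarrow> bool" where
  "innately_transitive \<Omega> G \<longleftrightarrow> perm_group \<Omega> G \<and> (\<exists>M. plinth \<Omega> G M)"

definition cartesian_decomposition :: "'a set \<Rightarrow> 'a set set set \<Rightarrow> bool" where
  "cartesian_decomposition \<Omega> E \<longleftrightarrow>
     (\<forall>\<Gamma>\<in>E. partition_on \<Omega> \<Gamma>) \<and> finite E \<and> card E \<ge> 2 \<and>
     (\<forall>c. (\<forall>\<Gamma>\<in>E. c \<Gamma> \<in> \<Gamma>) \<longrightarrow> card (\<Inter>\<Gamma>\<in>E. c \<Gamma>) = 1)"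

definition part_image :: "('a \<Rightarrow> 'a) \<Rightarrow> 'a set set \<Rightarrow> 'a set set" where
  "part_image g \<Gamma> = (\<lambda>\<gamma>. g ` \<gamma>) ` \<Gamma>"

definition CD :: "'a set \<Rightarrow> ('a \<Rightarrow> 'a) set \<Rightarrow> 'a set set set set" where
  "CD \<Omega> G = {E. cartesian_decomposition \<Omega> E \<and> (\<forall>g\<in>G. \<forall>\<Gamma>\<in>E. part_image g \<Gamma> \<in> E)}"

definition kernel_on_CD :: "('a \<Rightarrow> 'a) set \<Rightarrow> 'a set set set \<Rightarrow> ('a \<Rightarrow> 'a) set" where
  "kernel_on_CD M E = {m\<in>M. \<forall>\<Gamma>\<in>E. part_image m \<Gamma> = \<Gamma>}"

end

(*
  Suppose some m in M moves a partition \<Gamma> of E, and let F be the G-orbit of \<Gamma>; it lies in E.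
  The kernel of the action of M on F is normal in G and does not contain m, so by minimality of M
  it is trivial: M embeds into Sym(F) and |M| divides |F|!. On the other hand |\<Omega>| divides |M|
  by transitivity, and |\<Omega>| is the product of the |\<Delta>|, \<Delta> in E, hence divisible by |\<Gamma>|^|F|,
  where |\<Gamma>| >= 2 because m moves \<Gamma>. But n^k never divides k! for n >= 2 and k >= 1, since by
  Legendre's formula the exponent of a prime p in k! is smaller than k.
*)
theory Submission
  imports Defs "HOL-Algebra.Group_Action" "HOL-Computational_Algebra.Primes"
begin

text \<open>Keep \<open>inv\<close> as the inverse function of Defs rather than HOL-Algebra's group inverse.\<close>
unbundle no m_inv_syntax

section \<open>Prime powers dividing factorials\<close>

lemma fact_eq_prime_power_mult:
  fixes p n :: nat
  assumes "prime p"
  shows "fact n = p ^ (n div p) * fact (n div p) * (\<Prod>i\<in>{i\<in>{1..n}. \<not> p dvd i}. i)"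
proof -
  have "p > 0" using assms prime_gt_0_nat by blast
  have multiples: "{i\<in>{1..n}. p dvd i} = (*) p ` {1..n div p}"
  proof (intro equalityI subsetI)
    fix i assume "i \<in> {i\<in>{1..n}. p dvd i}"
    then obtain j where j: "i = p * j" "1 \<le> p * j" "p * j \<le> n" by auto
    then have "1 \<le> j" "j \<le> n div p"
      using \<open>p > 0\<close> by (auto simp: less_eq_div_iff_mult_less_eq mult.commute Suc_le_eq)
    with j(1) show "i \<in> (*) p ` {1..n div p}" by auto
  next
    fix i assume "i \<in> (*) p ` {1..n div p}"
    then obtain j where j: "i = p * j" "j \<in> {1..n div p}" by blast
    then have "p * j \<le> n"
      using \<open>p > 0\<close> by (simp add: less_eq_div_iff_mult_less_eq mult.commute)
    with j \<open>p > 0\<close> show "i \<in> {i\<in>{1..n}. p dvd i}" by auto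
  qed
  have "(\<Prod>i\<in>{i\<in>{1..n}. p dvd i}. i) = (\<Prod>j\<in>{1..n div p}. p * j)"
    unfolding multiples using \<open>p > 0\<close> by (subst prod.reindex) (auto simp: inj_on_def)
  also have "\<dots> = p ^ (n div p) * fact (n div p)"
    by (simp add: prod.distrib fact_prod)
  finally have "(\<Prod>i\<in>{i\<in>{1..n}. p dvd i}. i) = p ^ (n div p) * fact (n div p)" .
  moreover have "fact n = (\<Prod>i\<in>{i\<in>{1..n}. p dvd i}. i) * (\<Prod>i\<in>{i\<in>{1..n}. \<not> p dvd i}. i)"
    using prod.Int_Diff[of "{1..n}" "\<lambda>i. i" "{i. p dvd i}"]
    by (simp add: fact_prod Int_def set_diff_eq)
  ultimately show ?thesis by simp
qed

lemma prime_power_dvd_fact_imp_less: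
  fixes p k n :: nat
  assumes "prime p" "p ^ k dvd fact n" "n > 0"
  shows "k < n"
  using assms(2,3)
proof (induction n arbitrary: k rule: less_induct)
  case (less n)
  define q where "q = n div p"
  have "p > 1" using assms(1) prime_gt_1_nat by blast
  have "q < n"
    using \<open>p > 1\<close> \<open>n > 0\<close> by (simp add: q_def)
  have "2 * q \<le> p * q"
    using \<open>p > 1\<close> by simp
  also have "\<dots> \<le> n"
    by (simp add: q_def)
  finally have "2 * q \<le> n" .
  show "k < n"
  proof (cases "k \<le> q")
    case True
    with \<open>q < n\<close> show ?thesis by simp
  next
    case False
    define R where "R = (\<Prod>i\<in>{i\<in>{1..n}. \<not> p dvd i}. i)"
    have "coprime (p ^ (k - q)) R"
      using assms(1) by (auto simp: R_def prime_dvd_prod_iff prime_imp_coprime intro: coprime_power_left_iff[THEN iffD2])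
    moreover have "p ^ q * p ^ (k - q) dvd p ^ q * (fact q * R)"
      using less.prems(1) False fact_eq_prime_power_mult[OF assms(1), of n]
      by (simp add: q_def R_def mult.assoc flip: power_add)
    ultimately have "p ^ (k - q) dvd fact q"
      using \<open>p > 1\<close> by (simp add: coprime_dvd_mult_left_iff)
    moreover from this have "q > 0"
      using False \<open>p > 1\<close> by (auto intro: Nat.gr0I)
    ultimately have "k - q < q"
      using less.IH[OF \<open>q < n\<close>] by blast
    with \<open>2 * q \<le> n\<close> show ?thesis by linarith
  qed
qed

lemma power_not_dvd_fact:
  fixes n k :: nat
  assumes "n \<ge> 2" "k > 0"
  shows "\<not> n ^ k dvd fact k"
proof
  assume "n ^ k dvd fact k"
  obtain p where "prime p" "p dvd n"
    using assms(1) prime_factor_nat[of n] by auto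
  then have "p ^ k dvd fact k"
    using \<open>n ^ k dvd fact k\<close> dvd_power_same dvd_trans by blast
  then show False
    using prime_power_dvd_fact_imp_less[OF \<open>prime p\<close> _ assms(2)] by blast
qed

section \<open>Permutation groups as HOL-Algebra groups\<close>

definition perm_monoid :: "('a \<Rightarrow> 'a) set \<Rightarrow> ('a \<Rightarrow> 'a) monoid" where
  "perm_monoid H = \<lparr>carrier = H, mult = (\<circ>), one = id\<rparr>"

lemma group_perm_monoid:
  assumes "perm_group S H"
  shows "group (perm_monoid H)"
proof -
  have "\<exists>q\<in>H. q \<circ> p = id" if "p \<in> H" for p
    using that assms permutes_inv_o(2) unfolding perm_group_def by blast
  then show ?thesis
    using assms unfolding perm_group_def perm_monoid_def
    by (intro groupI) (auto simp: o_assoc)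
qed

lemma perm_group_subgroup_of:
  "perm_group S G \<Longrightarrow> subgroup_of H G \<Longrightarrow> perm_group S H"
  unfolding perm_group_def subgroup_of_def by blast

lemma minimal_normal_subgroup_imp_subgroup_of:
  "minimal_normal_subgroup M G \<Longrightarrow> subgroup_of M G"
  unfolding minimal_normal_subgroup_def normal_subgroup_of_def by blast

lemma card_Bij:
  assumes "finite S"
  shows "card (Bij S) = fact (card S)"
proof -
  have "bij_betw (\<lambda>p. restrict p S) {p. p permutes S} (Bij S)"
  proof (rule bij_betwI')
    fix p q assume "p \<in> {p. p permutes S}" "q \<in> {p. p permutes S}"
    then show "(restrict p S = restrict q S) = (p = q)"
      by (auto simp: fun_eq_iff restrict_def) (metis permutes_not_in)
  next
    fix p assume "p \<in> {p. p permutes S}"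
    then show "restrict p S \<in> Bij S"
      by (simp add: Bij_def permutes_imp_bij)
  next
    fix f assume f: "f \<in> Bij S"
    let ?p = "\<lambda>x. if x \<in> S then f x else x"
    have "bij_betw ?p S S = bij_betw f S S"
      by (rule bij_betw_cong) simp
    with f have "?p permutes S"
      by (intro bij_imp_permutes) (simp_all add: Bij_def)
    moreover have "f = restrict ?p S"
      using f by (simp add: Bij_def extensional_restrict restrict_cong)
    ultimately show "\<exists>p\<in>{p. p permutes S}. f = restrict p S"
      by blast
  qed
  then have "card {p. p permutes S} = card (Bij S)"
    by (rule bij_betw_same_card)
  with card_permutations[OF refl assms] show ?thesis
    by simp
qed

lemma (in faithful_action) order_dvd_fact_card:
  assumes "finite E"
  shows "order G dvd fact (card E)"
proof -
  interpret hom: group_hom G "BijGroup E" \<phi> by (rule group_hom)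
  have "card (rcosets\<^bsub>BijGroup E\<^esub> (\<phi> ` carrier G)) * card (\<phi> ` carrier G) = order (BijGroup E)"
    using group.lagrange[OF group_BijGroup hom.img_is_subgroup] .
  moreover have "card (\<phi> ` carrier G) = order G"
    using faithful card_image by (metis order_def)
  moreover have "order (BijGroup E) = fact (card E)"
    using card_Bij[OF assms] by (simp add: order_def BijGroup_def)
  ultimately show ?thesis by (metis dvd_triv_right)
qed

lemma (in transitive_action) card_dvd_order:
  assumes "x \<in> E"
  shows "card E dvd order G"
proof -
  have "orbit G \<phi> x = E"
    using unique_orbit assms element_image unfolding orbit_def by blast
  then show ?thesis
    using orbit_stabilizer_theorem[OF assms] by (metis dvd_triv_left)
qed

text \<open>\<open>BijGroup E\<close> consists of functions that are extensional on \<open>E\<close>, hence the restriction.\<close>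

lemma group_action_perm_monoidI:
  assumes "perm_group S H"
    and maps_to: "\<And>h. h \<in> H \<Longrightarrow> f h ` E \<subseteq> E"
    and comp: "\<And>g h x. g \<in> H \<Longrightarrow> h \<in> H \<Longrightarrow> x \<in> E \<Longrightarrow> f (g \<circ> h) x = f g (f h x)"
    and id: "\<And>x. x \<in> E \<Longrightarrow> f id x = x"
  shows "group_action (perm_monoid H) E (\<lambda>h. restrict (f h) E)"
proof -
  have "restrict (f h) E \<in> Bij E" if "h \<in> H" for h
  proof -
    have "h permutes S" "inv h \<in> H"
      using that assms(1) unfolding perm_group_def by auto
    then have "inv h \<in> H" "h \<circ> inv h = id" "inv h \<circ> h = id"
      by (simp_all add: permutes_inv_o)
    then have "bij_betw (f h) E E"
      using that maps_to comp[of "inv h" h] comp[of h "inv h"] id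
      by (intro bij_betw_byWitness[where f' = "f (inv h)"]) auto
    then show ?thesis
      by (simp add: Bij_def)
  qed
  moreover have "restrict (f (g \<circ> h)) E = compose E (restrict (f g) E) (restrict (f h) E)"
    if "g \<in> H" "h \<in> H" for g h
    unfolding compose_def by (rule restrict_ext) (use that maps_to comp in auto)
  ultimately show ?thesis
    using group_perm_monoid[OF assms(1)] group_BijGroup
    unfolding group_action_def group_hom_def group_hom_axioms_def
    by (auto intro!: homI simp: perm_monoid_def BijGroup_def)
qed

lemma card_dvd_card_if_transitive_on:
  assumes "perm_group S H" "transitive_on S H" "S \<noteq> {}"
  shows "card S dvd card H"
proof -
  have "group_action (perm_monoid H) S (\<lambda>h. restrict h S)"
    using assms(1) permutes_image
    by (intro group_action_perm_monoidI[where f = "\<lambda>h. h"]) (auto simp: perm_group_def)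
  then interpret transitive_action "perm_monoid H" S "\<lambda>h. restrict h S"
    using assms(2)
    by (intro transitive_action.intro transitive_action_axioms.intro)
      (auto simp: transitive_on_def perm_monoid_def)
  show ?thesis
    using card_dvd_order assms(3) by (auto simp: order_def perm_monoid_def)
qed

section \<open>The induced action on partitions\<close>

lemma part_image_comp: "part_image (f \<circ> g) \<Gamma> = part_image f (part_image g \<Gamma>)"
  unfolding part_image_def by (auto simp: image_comp)

lemma part_image_id [simp]: "part_image id \<Gamma> = \<Gamma>"
  unfolding part_image_def by simp

lemma part_image_inv_cancel:
  assumes "p permutes S"
  shows "part_image (inv p) (part_image p \<Gamma>) = \<Gamma>" "part_image p (part_image (inv p) \<Gamma>) = \<Gamma>"
  using assms by (simp_all flip: part_image_comp add: permutes_inv_o)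

lemma card_part_image:
  assumes "inj f"
  shows "card (part_image f \<Gamma>) = card \<Gamma>"
proof -
  have "inj_on ((`) f) \<Gamma>"
    using assms by (auto intro: inj_onI simp: inj_image_eq_iff)
  then show ?thesis
    unfolding part_image_def by (rule card_image)
qed

lemma two_le_card_if_part_image_neq:
  assumes "partition_on \<Omega> \<Gamma>" "finite \<Omega>" "p permutes \<Omega>" "part_image p \<Gamma> \<noteq> \<Gamma>"
  shows "2 \<le> card \<Gamma>"
proof (rule ccontr)
  assume "\<not> 2 \<le> card \<Gamma>"
  then have "card \<Gamma> = 0 \<or> card \<Gamma> = 1"
    by linarith
  then have "\<Gamma> = {} \<or> (\<exists>B. \<Gamma> = {B})"
    using finite_elements[OF assms(2,1)] by (auto simp: card_1_singleton_iff)
  then have "\<Gamma> \<subseteq> {\<Omega>}"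
    using partition_onD1[OF assms(1)] by auto
  then have "part_image p \<Gamma> = \<Gamma>"
    using permutes_image[OF assms(3)] by (auto simp: part_image_def subset_singleton_iff)
  with assms(4) show False ..
qed

definition partition_orbit :: "('a \<Rightarrow> 'a) set \<Rightarrow> 'a set set \<Rightarrow> 'a set set set" where
  "partition_orbit G \<Gamma> = (\<lambda>g. part_image g \<Gamma>) ` G"

lemma partition_orbit_self: "id \<in> G \<Longrightarrow> \<Gamma> \<in> partition_orbit G \<Gamma>"
  unfolding partition_orbit_def by force

lemma part_image_in_partition_orbit:
  assumes "perm_group S G" "g \<in> G" "\<Delta> \<in> partition_orbit G \<Gamma>"
  shows "part_image g \<Delta> \<in> partition_orbit G \<Gamma>"
  using assms unfolding perm_group_def partition_orbit_def by (auto simp flip: part_image_comp)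

lemma partition_orbit_subset_CD:
  "E \<in> CD \<Omega> G \<Longrightarrow> \<Gamma> \<in> E \<Longrightarrow> partition_orbit G \<Gamma> \<subseteq> E"
  unfolding partition_orbit_def CD_def by blast

lemma card_in_partition_orbit:
  assumes "perm_group S G" "\<Delta> \<in> partition_orbit G \<Gamma>"
  shows "card \<Delta> = card \<Gamma>"
  using assms permutes_inj card_part_image unfolding perm_group_def partition_orbit_def by blast

text \<open>Although named after Cartesian decompositions, \<open>kernel_on_CD M F\<close> makes sense for any set
  \<open>F\<close> of partitions; below \<open>F\<close> is a \<open>G\<close>-orbit of partitions.\<close>

lemma normal_subgroup_of_kernel_on_CD:
  assumes G: "perm_group S G" and M: "normal_subgroup_of M G"
    and F: "\<And>g \<Delta>. g \<in> G \<Longrightarrow> \<Delta> \<in> F \<Longrightarrow> part_image g \<Delta> \<in> F"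
  shows "normal_subgroup_of (kernel_on_CD M F) G"
proof -
  have perm: "g permutes S" "inv g \<in> G" if "g \<in> G" for g
    using that G unfolding perm_group_def by auto
  have sub: "kernel_on_CD M F \<subseteq> G" and "id \<in> kernel_on_CD M F"
    using M by (auto simp: kernel_on_CD_def normal_subgroup_of_def subgroup_of_def)
  moreover have "p \<circ> q \<in> kernel_on_CD M F" if "p \<in> kernel_on_CD M F" "q \<in> kernel_on_CD M F" for p q
    using that M by (auto simp: kernel_on_CD_def normal_subgroup_of_def subgroup_of_def part_image_comp)
  moreover have "inv p \<in> kernel_on_CD M F" if "p \<in> kernel_on_CD M F" for p
  proof -
    have "part_image (inv p) \<Delta> = \<Delta>" if "\<Delta> \<in> F" for \<Delta>
      using \<open>p \<in> kernel_on_CD M F\<close> sub that part_image_inv_cancel(1)[OF perm(1), of p \<Delta>]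
      by (auto simp: kernel_on_CD_def)
    then show ?thesis
      using that M by (auto simp: kernel_on_CD_def normal_subgroup_of_def subgroup_of_def)
  qed
  moreover have "g \<circ> n \<circ> inv g \<in> kernel_on_CD M F" if "g \<in> G" "n \<in> kernel_on_CD M F" for g n
  proof -
    have "part_image (g \<circ> n \<circ> inv g) \<Delta> = \<Delta>" if "\<Delta> \<in> F" for \<Delta>
      using \<open>g \<in> G\<close> \<open>n \<in> kernel_on_CD M F\<close> F[OF perm(2) that] part_image_inv_cancel(2)[OF perm(1)]
      by (simp add: part_image_comp kernel_on_CD_def)
    then show ?thesis
      using that M by (auto simp: kernel_on_CD_def normal_subgroup_of_def)
  qed
  ultimately show ?thesis
    unfolding normal_subgroup_of_def subgroup_of_def by blast
qed

lemma kernel_on_CD_minimal_normal_cases: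
  assumes "perm_group S G" "minimal_normal_subgroup M G"
    and "\<And>g \<Delta>. g \<in> G \<Longrightarrow> \<Delta> \<in> F \<Longrightarrow> part_image g \<Delta> \<in> F"
  shows "kernel_on_CD M F = {id} \<or> kernel_on_CD M F = M"
proof -
  have "normal_subgroup_of (kernel_on_CD M F) G"
    using normal_subgroup_of_kernel_on_CD[OF assms(1) _ assms(3)] assms(2)
    unfolding minimal_normal_subgroup_def by blast
  moreover have "kernel_on_CD M F \<subseteq> M"
    unfolding kernel_on_CD_def by blast
  ultimately show ?thesis
    using assms(2) unfolding minimal_normal_subgroup_def by blast
qed

lemma card_dvd_fact_if_kernel_on_CD_trivial:
  assumes H: "perm_group S H" and "finite F"
    and F: "\<And>h \<Delta>. h \<in> H \<Longrightarrow> \<Delta> \<in> F \<Longrightarrow> part_image h \<Delta> \<in> F"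
    and trivial: "kernel_on_CD H F = {id}"
  shows "card H dvd fact (card F)"
proof -
  let ?\<phi> = "\<lambda>h. restrict (part_image h) F"
  have "group_action (perm_monoid H) F ?\<phi>"
    using F by (intro group_action_perm_monoidI[OF H]) (auto simp: part_image_comp)
  then interpret group_action "perm_monoid H" F ?\<phi> .
  have "kernel (perm_monoid H) (BijGroup F) ?\<phi> = kernel_on_CD H F"
    by (auto simp: kernel_def kernel_on_CD_def perm_monoid_def BijGroup_def restrict_def fun_eq_iff)
  then have "inj_on ?\<phi> H"
    using group_hom.inj_iff_trivial_ker[OF group_hom] trivial by (simp add: perm_monoid_def)
  then interpret faithful_action "perm_monoid H" F ?\<phi>
    by unfold_locales (simp add: perm_monoid_def)
  show ?thesis
    using order_dvd_fact_card[OF \<open>finite F\<close>] by (simp add: order_def perm_monoid_def)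
qed

lemma kernel_on_CD_partition_orbit_eq_id:
  assumes G: "perm_group S G" and M: "minimal_normal_subgroup M G"
    and "m \<in> M" "part_image m \<Gamma> \<noteq> \<Gamma>"
  shows "kernel_on_CD M (partition_orbit G \<Gamma>) = {id}"
proof -
  have "\<Gamma> \<in> partition_orbit G \<Gamma>"
    using G by (simp add: partition_orbit_self perm_group_def)
  then have "m \<notin> kernel_on_CD M (partition_orbit G \<Gamma>)"
    using assms(4) unfolding kernel_on_CD_def by blast
  with \<open>m \<in> M\<close> show ?thesis
    using kernel_on_CD_minimal_normal_cases[OF G M part_image_in_partition_orbit[OF G]] by blast
qed

lemma card_dvd_fact_card_partition_orbit:
  assumes G: "perm_group S G" and M: "minimal_normal_subgroup M G"
    and "m \<in> M" "part_image m \<Gamma> \<noteq> \<Gamma>" "finite (partition_orbit G \<Gamma>)"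
  shows "card M dvd fact (card (partition_orbit G \<Gamma>))"
proof -
  have "subgroup_of M G"
    using M by (rule minimal_normal_subgroup_imp_subgroup_of)
  then have "perm_group S M" "M \<subseteq> G"
    using perm_group_subgroup_of[OF G] unfolding subgroup_of_def by blast+
  show ?thesis
  proof (rule card_dvd_fact_if_kernel_on_CD_trivial[OF \<open>perm_group S M\<close> assms(5)])
    show "part_image h \<Delta> \<in> partition_orbit G \<Gamma>" if "h \<in> M" "\<Delta> \<in> partition_orbit G \<Gamma>" for h \<Delta>
      using that \<open>M \<subseteq> G\<close> part_image_in_partition_orbit[OF G] by blast
    show "kernel_on_CD M (partition_orbit G \<Gamma>) = {id}"
      using assms(1-4) by (rule kernel_on_CD_partition_orbit_eq_id)
  qed
qed

section \<open>Cartesian decompositions\<close>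

text \<open>A point corresponds to the tuple of blocks containing it.\<close>

lemma card_cartesian_decomposition:
  assumes "cartesian_decomposition \<Omega> E"
  shows "card \<Omega> = (\<Prod>\<Gamma>\<in>E. card \<Gamma>)"
proof -
  have part: "partition_on \<Omega> \<Gamma>" if "\<Gamma> \<in> E" for \<Gamma>
    using assms that unfolding cartesian_decomposition_def by blast
  have "finite E" "E \<noteq> {}"
    using assms unfolding cartesian_decomposition_def by auto
  have singleton: "\<exists>x. (\<Inter>\<Gamma>\<in>E. c \<Gamma>) = {x}" if "c \<in> (\<Pi>\<^sub>E \<Gamma>\<in>E. \<Gamma>)" for c
  proof -
    have "\<forall>\<Gamma>\<in>E. c \<Gamma> \<in> \<Gamma>"
      using that by blast
    then have "card (\<Inter>\<Gamma>\<in>E. c \<Gamma>) = 1"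
      using assms unfolding cartesian_decomposition_def by blast
    then show ?thesis
      by (simp add: card_1_singleton_iff)
  qed
  have block_eq: "B = B'" if "\<Gamma> \<in> E" "B \<in> \<Gamma>" "B' \<in> \<Gamma>" "x \<in> B" "x \<in> B'" for \<Gamma> B B' x
    using that disjointD[OF partition_onD2[OF part]] by blast
  have "bij_betw (\<lambda>c. the_elem (\<Inter>\<Gamma>\<in>E. c \<Gamma>)) (\<Pi>\<^sub>E \<Gamma>\<in>E. \<Gamma>) \<Omega>"
  proof (rule bij_betwI')
    fix c d assume c: "c \<in> (\<Pi>\<^sub>E \<Gamma>\<in>E. \<Gamma>)" and d: "d \<in> (\<Pi>\<^sub>E \<Gamma>\<in>E. \<Gamma>)"
    obtain x where x: "(\<Inter>\<Gamma>\<in>E. c \<Gamma>) = {x}"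
      using singleton[OF c] by blast
    obtain y where y: "(\<Inter>\<Gamma>\<in>E. d \<Gamma>) = {y}"
      using singleton[OF d] by blast
    show "(the_elem (\<Inter>\<Gamma>\<in>E. c \<Gamma>) = the_elem (\<Inter>\<Gamma>\<in>E. d \<Gamma>)) = (c = d)"
    proof
      assume "the_elem (\<Inter>\<Gamma>\<in>E. c \<Gamma>) = the_elem (\<Inter>\<Gamma>\<in>E. d \<Gamma>)"
      then have "x = y"
        using x y by simp
      show "c = d"
      proof (rule PiE_ext[OF c d])
        fix \<Gamma> assume "\<Gamma> \<in> E"
        moreover have "x \<in> c \<Gamma>" "x \<in> d \<Gamma>"
          using x y \<open>x = y\<close> \<open>\<Gamma> \<in> E\<close> by blast+
        ultimately show "c \<Gamma> = d \<Gamma>"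
          using block_eq PiE_mem[OF c] PiE_mem[OF d] by blast
      qed
    qed simp
  next
    fix c assume c: "c \<in> (\<Pi>\<^sub>E \<Gamma>\<in>E. \<Gamma>)"
    obtain x where x: "(\<Inter>\<Gamma>\<in>E. c \<Gamma>) = {x}"
      using singleton[OF c] by blast
    obtain \<Gamma> where "\<Gamma> \<in> E"
      using \<open>E \<noteq> {}\<close> by blast
    then have "x \<in> c \<Gamma>" "c \<Gamma> \<in> \<Gamma>"
      using x PiE_mem[OF c] by blast+
    then have "x \<in> \<Omega>"
      using partition_onD1[OF part[OF \<open>\<Gamma> \<in> E\<close>]] by blast
    with x show "the_elem (\<Inter>\<Gamma>\<in>E. c \<Gamma>) \<in> \<Omega>"
      by simp
  next
    fix x assume "x \<in> \<Omega>"
    define c where "c = (\<lambda>\<Gamma>\<in>E. SOME B. B \<in> \<Gamma> \<and> x \<in> B)"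
    have block: "c \<Gamma> \<in> \<Gamma> \<and> x \<in> c \<Gamma>" if "\<Gamma> \<in> E" for \<Gamma>
    proof -
      have "\<exists>B. B \<in> \<Gamma> \<and> x \<in> B"
        using \<open>x \<in> \<Omega>\<close> partition_onD1[OF part[OF that]] by blast
      from someI_ex[OF this] show ?thesis
        using that by (simp add: c_def)
    qed
    have c: "c \<in> (\<Pi>\<^sub>E \<Gamma>\<in>E. \<Gamma>)"
      using block by (simp add: c_def PiE_iff)
    have "x \<in> (\<Inter>\<Gamma>\<in>E. c \<Gamma>)"
      using block by blast
    with singleton[OF c] have "x = the_elem (\<Inter>\<Gamma>\<in>E. c \<Gamma>)"
      by force
    with c show "\<exists>c\<in>\<Pi>\<^sub>E \<Gamma>\<in>E. \<Gamma>. x = the_elem (\<Inter>\<Gamma>\<in>E. c \<Gamma>)"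
      by blast
  qed
  then have "card (\<Pi>\<^sub>E \<Gamma>\<in>E. \<Gamma>) = card \<Omega>"
    by (rule bij_betw_same_card)
  with card_PiE[OF \<open>finite E\<close>, of "\<lambda>\<Gamma>. \<Gamma>"] show ?thesis
    by simp
qed

lemma power_card_dvd_card_cartesian_decomposition:
  assumes "cartesian_decomposition \<Omega> E" "F \<subseteq> E" "\<And>\<Delta>. \<Delta> \<in> F \<Longrightarrow> card \<Delta> = n"
  shows "n ^ card F dvd card \<Omega>"
proof -
  have "finite E" using assms(1) unfolding cartesian_decomposition_def by blast
  have "n ^ card F = (\<Prod>\<Delta>\<in>F. card \<Delta>)"
    using assms(3) by simp
  also have "\<dots> dvd (\<Prod>\<Delta>\<in>E. card \<Delta>)"
    using prod_dvd_prod_subset[OF \<open>finite E\<close> assms(2)] .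
  finally show ?thesis
    using card_cartesian_decomposition[OF assms(1)] by simp
qed

lemma finite_partition_orbit_CD:
  assumes "E \<in> CD \<Omega> G" "\<Gamma> \<in> E"
  shows "finite (partition_orbit G \<Gamma>)"
proof (rule finite_subset[OF partition_orbit_subset_CD[OF assms]])
  show "finite E"
    using assms(1) unfolding CD_def cartesian_decomposition_def by blast
qed

lemma card_partition_orbit_CD_gt_0:
  assumes "perm_group S G" "E \<in> CD \<Omega> G" "\<Gamma> \<in> E"
  shows "card (partition_orbit G \<Gamma>) > 0"
proof -
  have "\<Gamma> \<in> partition_orbit G \<Gamma>"
    using assms(1) by (simp add: partition_orbit_self perm_group_def)
  with finite_partition_orbit_CD[OF assms(2,3)] show ?thesis
    by (auto simp: card_gt_0_iff)
qed

lemma power_card_dvd_card_partition_orbit: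
  assumes "perm_group \<Omega> G" "E \<in> CD \<Omega> G" "\<Gamma> \<in> E"
  shows "card \<Gamma> ^ card (partition_orbit G \<Gamma>) dvd card \<Omega>"
proof (rule power_card_dvd_card_cartesian_decomposition)
  show "cartesian_decomposition \<Omega> E"
    using assms(2) unfolding CD_def by blast
  show "partition_orbit G \<Gamma> \<subseteq> E"
    using assms(2,3) by (rule partition_orbit_subset_CD)
  show "card \<Delta> = card \<Gamma>" if "\<Delta> \<in> partition_orbit G \<Gamma>" for \<Delta>
    using assms(1) that by (rule card_in_partition_orbit)
qed

theorem proposition2p1:
  fixes \<Omega> :: "'a set" and G M :: "('a \<Rightarrow> 'a) set" and E :: "'a set set set"
  assumes "finite \<Omega>"
    and "innately_transitive \<Omega> G"
    and "plinth \<Omega> G M"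
    and "E \<in> CD \<Omega> G"
  shows "kernel_on_CD M E = M"
proof (rule ccontr)
  assume "kernel_on_CD M E \<noteq> M"
  then obtain m \<Gamma> where "m \<in> M" "\<Gamma> \<in> E" and moved: "part_image m \<Gamma> \<noteq> \<Gamma>"
    unfolding kernel_on_CD_def by auto
  have G: "perm_group \<Omega> G" and M_min: "minimal_normal_subgroup M G" and "transitive_on \<Omega> M"
    using assms(2,3) unfolding innately_transitive_def plinth_def by blast+
  have M: "perm_group \<Omega> M"
    by (rule perm_group_subgroup_of[OF G minimal_normal_subgroup_imp_subgroup_of[OF M_min]])
  then have "m permutes \<Omega>"
    using \<open>m \<in> M\<close> unfolding perm_group_def by blast
  then have "\<Omega> \<noteq> {}"
    using moved by (auto simp: permutes_empty)
  have "partition_on \<Omega> \<Gamma>"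
    using assms(4) \<open>\<Gamma> \<in> E\<close> unfolding CD_def cartesian_decomposition_def by blast
  let ?F = "partition_orbit G \<Gamma>"
  have "card \<Gamma> ^ card ?F dvd card \<Omega>"
    using G assms(4) \<open>\<Gamma> \<in> E\<close> by (rule power_card_dvd_card_partition_orbit)
  also have "card \<Omega> dvd card M"
    using M \<open>transitive_on \<Omega> M\<close> \<open>\<Omega> \<noteq> {}\<close> by (rule card_dvd_card_if_transitive_on)
  also have "card M dvd fact (card ?F)"
    using G M_min \<open>m \<in> M\<close> moved finite_partition_orbit_CD[OF assms(4) \<open>\<Gamma> \<in> E\<close>]
    by (rule card_dvd_fact_card_partition_orbit)
  finally show False
    using power_not_dvd_fact[OF
        two_le_card_if_part_image_neq[OF \<open>partition_on \<Omega> \<Gamma>\<close> assms(1) \<open>m permutes \<Omega>\<close> moved]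
        card_partition_orbit_CD_gt_0[OF G assms(4) \<open>\<Gamma> \<in> E\<close>]]
    by contradiction
qed

end
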